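(* For every strategy profile $s$ with $S_0(s)\vee S_1(s)$: $\ \mathsf{SAcBes}(s)\vee\mathsf{SBcAes}(s)\iff\mathsf{SPE}(s)$.
   Context: Let $P=\{A,B\}$ and $\mathrm{Choice}=\{d,r\}$; a payoff function is $f:P\to\mathbb{R}$. Strategy profiles are elements of the final coalgebra of $X\mapsto\mathbb{R}^P+P\times\mathrm{Choice}\times X\times X$ (finite or infinite trees $\langle f\rangle$ or $\langle p,c,s_d,s_r\rangle$, equality being bisimilarity). The payoff $\widehat{s}$ is the partial function given by $\widehat{\langle f\rangle}=f$, $\widehat{\langle p,d,s_d,s_r\rangle}=\widehat{s_d}$, $\widehat{\langle p,r,s_d,s_r\rangle}=\widehat{s_r}$. Convergence $\downarrow$: least predicate with $\downarrow(s)$ iff $s=\langle f\rangle$, or $s=\langle p,d,s_d,s_r\rangle\wedge\downarrow(s_d)$, or $s=\langle p,r,s_d,s_r\rangle\wedge\downarrow(s_r)$. Strong convergence $\Downarrow$: greatest predicate with $\Downarrow(s)$ iff $s=\langle f\rangle$, or $s=\langle p,c,s_d,s_r\rangle$ with $\downarrow(s),\Downarrow(s_d),\Downarrow(s_r)$. For a predicate $\Phi$, $\Box\Phi$ is the greatest predicate such that $\Box\Phi(s)$ iff $\Phi(s)$ and, whenever $s=\langle p,c,s_d,s_r\rangle$, $\Box\Phi(s_d)$ and $\Box\Phi(s_r)$. $\mathsf{PE}(s)$ holds iff $\Downarrow(s)$ and (if $s=\langle p,d,s_d,s_r\rangle$ then $\widehat{s_d}(p)\ge\widehat{s_r}(p)$)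 and (if $s=\langle p,r,s_d,s_r\rangle$ then $\widehat{s_r}(p)\ge\widehat{s_d}(p)$); $\mathsf{SPE}=\Box\,\mathsf{PE}$. Let $f_{0,1}=(A\mapsto0,B\mapsto1)$, $f_{1,0}=(A\mapsto1,B\mapsto0)$. $S_0,S_1$ are the greatest predicates with $S_0(s)$ iff $s=\langle A,c,\langle f_{0,1}\rangle,s'\rangle$ with $S_1(s')$, and $S_1(s)$ iff $s=\langle B,c,\langle f_{1,0}\rangle,s'\rangle$ with $S_0(s')$ (these are the profiles of the infinite alternating "$0,1$-game"). $\mathsf{AcBes}$ is the least predicate such that $\mathsf{AcBes}(s)$ holds iff: whenever $s=\langle p,c,\langle f\rangle,s'\rangle$, then ($p=A$, $f=f_{0,1}$, $c=r$, $\mathsf{AcBes}(s')$) or ($p=B$, $f=f_{1,0}$, and ($c=d$ or $\mathsf{AcBes}(s')$)). $\mathsf{BcAes}$ is the least predicate such that $\mathsf{BcAes}(s)$ holds iff: whenever $s=\langle p,c,\langle f\rangle,s'\rangle$, then ($p=B$, $f=f_{1,0}$, $c=r$, $\mathsf{BcAes}(s')$) or ($p=A$, $f=f_{0,1}$, and ($c=d$ or $\mathsf{BcAes}(s')$)). $\mathsf{SAcBes}=\Box\,\mathsf{AcBes}$, $\mathsf{SBcAes}=\Box\,\mathsf{BcAes}$. *)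

theory Defs
  imports Main "HOL.Real"
begin

datatype P = A | B
datatype Choice = d | r

text \<open>Strategy profiles: final coalgebra of X = (P => real) + P * Choice * X * X;
  equality of codatatype values is bisimilarity.\<close>
codatatype strat = Leaf "P \<Rightarrow> real" | Node P Choice strat strat

partial_function (option) payoff :: "strat \<Rightarrow> (P \<Rightarrow> real) option" where
  "payoff s = (case s of Leaf f \<Rightarrow> Some f
     | Node p c sd sr \<Rightarrow> (if c = d then payoff sd else payoff sr))"

inductive conv :: "strat \<Rightarrow> bool" where
  conv_leaf: "conv (Leaf f)"
| conv_d: "conv sd \<Longrightarrow> conv (Node p d sd sr)"
| conv_r: "conv sr \<Longrightarrow> conv (Node p r sd sr)"

coinductive sconv :: "strat \<Rightarrow> bool" where
  sconv_leaf: "sconv (Leaf f)"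
| sconv_node: "conv (Node p c sd sr) \<Longrightarrow> sconv sd \<Longrightarrow> sconv sr \<Longrightarrow> sconv (Node p c sd sr)"

coinductive always :: "(strat \<Rightarrow> bool) \<Rightarrow> strat \<Rightarrow> bool" for \<Phi> where
  always_leaf: "\<Phi> (Leaf f) \<Longrightarrow> always \<Phi> (Leaf f)"
| always_node: "\<Phi> (Node p c sd sr) \<Longrightarrow> always \<Phi> sd \<Longrightarrow> always \<Phi> sr \<Longrightarrow> always \<Phi> (Node p c sd sr)"

definition PE :: "strat \<Rightarrow> bool" where
  "PE s \<longleftrightarrow> sconv s
     \<and> (\<forall>p sd sr. s = Node p d sd sr \<longrightarrow> the (payoff sd) p \<ge> the (payoff sr) p)
     \<and> (\<forall>p sd sr. s = Node p r sd sr \<longrightarrow> the (payoff sr) p \<ge> the (payoff sd) p)"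

definition SPE :: "strat \<Rightarrow> bool" where
  "SPE = always PE"

definition f01 :: "P \<Rightarrow> real" where "f01 = (\<lambda>x. case x of A \<Rightarrow> 0 | B \<Rightarrow> 1)"
definition f10 :: "P \<Rightarrow> real" where "f10 = (\<lambda>x. case x of A \<Rightarrow> 1 | B \<Rightarrow> 0)"

coinductive S0 :: "strat \<Rightarrow> bool" and S1 :: "strat \<Rightarrow> bool" where
  S0I: "S1 s' \<Longrightarrow> S0 (Node A c (Leaf f01) s')"
| S1I: "S0 s' \<Longrightarrow> S1 (Node B c (Leaf f10) s')"

inductive AcBes :: "strat \<Rightarrow> bool" where
  AcBes_other: "(\<nexists>p c f s'. s = Node p c (Leaf f) s') \<Longrightarrow> AcBes s"
| AcBes_A: "AcBes s' \<Longrightarrow> AcBes (Node A r (Leaf f01) s')"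
| AcBes_Bd: "AcBes (Node B d (Leaf f10) s')"
| AcBes_B: "AcBes s' \<Longrightarrow> AcBes (Node B c (Leaf f10) s')"

inductive BcAes :: "strat \<Rightarrow> bool" where
  BcAes_other: "(\<nexists>p c f s'. s = Node p c (Leaf f) s') \<Longrightarrow> BcAes s"
| BcAes_B: "BcAes s' \<Longrightarrow> BcAes (Node B r (Leaf f10) s')"
| BcAes_Ad: "BcAes (Node A d (Leaf f01) s')"
| BcAes_A: "BcAes s' \<Longrightarrow> BcAes (Node A c (Leaf f01) s')"

definition SAcBes :: "strat \<Rightarrow> bool" where "SAcBes = always AcBes"
definition SBcAes :: "strat \<Rightarrow> bool" where "SBcAes = always BcAes"

end

theory Submission
  imports Defs
begin

text \<open>In a profile of the 0,1-game every subgame that is not a leaf is again such a profile, and a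
  convergent one has outcome f01 or f10. At a node whose continuation converges, the
  equilibrium condition says exactly that the continuation has the same outcome as the node itself.
  Hence a subgame perfect equilibrium is a profile all of whose subgames converge to one common
  outcome, and AcBes resp. BcAes hold throughout exactly when that common outcome is f10 resp. f01.\<close>

lemma payoff_Leaf [simp]: "payoff (Leaf f) = Some f"
  by (subst payoff.simps) simp

lemma payoff_Node [simp]: "payoff (Node p c sd sr) = (if c = d then payoff sd else payoff sr)"
  by (subst payoff.simps) simp

lemma conv_Leaf [simp]: "conv (Leaf f)"
  by (fact conv_leaf)

lemma conv_Node [simp]: "conv (Node p c sd sr) \<longleftrightarrow> (if c = d then conv sd else conv sr)"
  by (cases c) (auto intro: conv.intros elim: conv.cases)

lemma f01_f10_simps [simp]: "f01 A = 0" "f01 B = 1" "f10 A = 1" "f10 B = 0" "f01 \<noteq> f10" "f10 \<noteq> f01"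
  by (auto simp: f01_def f10_def fun_eq_iff intro: exI[of _ A])

definition zero_one_game :: "strat \<Rightarrow> bool" where
  "zero_one_game s \<longleftrightarrow> S0 s \<or> S1 s"

lemma zero_one_game_cases:
  assumes "zero_one_game s"
  obtains c s' where "s = Node A c (Leaf f01) s'" "zero_one_game s'"
    | c s' where "s = Node B c (Leaf f10) s'" "zero_one_game s'"
  using assms unfolding zero_one_game_def by (auto elim: S0.cases S1.cases)

lemma zero_one_game_NodeD:
  "zero_one_game (Node p c sd sr) \<Longrightarrow>
     zero_one_game sr \<and> (p = A \<and> sd = Leaf f01 \<or> p = B \<and> sd = Leaf f10)"
  by (erule zero_one_game_cases) auto

lemma not_zero_one_game_Leaf [simp]: "\<not> zero_one_game (Leaf f)"
  by (auto elim: zero_one_game_cases)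

lemma conv_zero_one_game_payoff:
  "conv s \<Longrightarrow> zero_one_game s \<Longrightarrow> payoff s = Some f01 \<or> payoff s = Some f10"
  by (induction rule: conv.induct) (auto dest: zero_one_game_NodeD)

lemma AcBes_iff_zero_one_game:
  assumes "zero_one_game s"
  shows "AcBes s \<longleftrightarrow> conv s \<and> payoff s = Some f10"
proof
  assume "AcBes s"
  then show "conv s \<and> payoff s = Some f10"
    using assms
  proof (induction rule: AcBes.induct)
    case (AcBes_other s)
    then show ?case by (auto elim: zero_one_game_cases)
  qed (auto intro: conv.intros dest: zero_one_game_NodeD)
next
  assume "conv s \<and> payoff s = Some f10"
  then have "conv s" "payoff s = Some f10" by auto
  then show "AcBes s"
    using assms by (induction rule: conv.induct) (auto intro: AcBes.intros dest: zero_one_game_NodeD)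
qed

lemma BcAes_iff_zero_one_game:
  assumes "zero_one_game s"
  shows "BcAes s \<longleftrightarrow> conv s \<and> payoff s = Some f01"
proof
  assume "BcAes s"
  then show "conv s \<and> payoff s = Some f01"
    using assms
  proof (induction rule: BcAes.induct)
    case (BcAes_other s)
    then show ?case by (auto elim: zero_one_game_cases)
  qed (auto intro: conv.intros dest: zero_one_game_NodeD)
next
  assume "conv s \<and> payoff s = Some f01"
  then have "conv s" "payoff s = Some f01" by auto
  then show "BcAes s"
    using assms by (induction rule: conv.induct) (auto intro: BcAes.intros dest: zero_one_game_NodeD)
qed

lemma sconv_imp_conv: "sconv s \<Longrightarrow> conv s"
  by (erule sconv.cases) (auto intro: conv.intros)

lemma PE_zero_one_game_Node_iff:
  assumes "zero_one_game (Node p c (Leaf f) s')" and "conv s'"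
  shows "PE (Node p c (Leaf f) s') \<longleftrightarrow>
    sconv (Node p c (Leaf f) s') \<and> payoff s' = payoff (Node p c (Leaf f) s')"
proof -
  from assms have "p = A \<and> f = f01 \<or> p = B \<and> f = f10"
    and "payoff s' = Some f01 \<or> payoff s' = Some f10"
    by (auto dest: zero_one_game_NodeD conv_zero_one_game_payoff)
  then show ?thesis
    by (cases c) (auto simp: PE_def)
qed

lemma always_Leaf_iff [simp]: "always \<Phi> (Leaf f) \<longleftrightarrow> \<Phi> (Leaf f)"
  by (auto intro: always_leaf elim: always.cases)

lemma always_Node_iff [simp]:
  "always \<Phi> (Node p c sd sr) \<longleftrightarrow> \<Phi> (Node p c sd sr) \<and> always \<Phi> sd \<and> always \<Phi> sr"
  by (auto intro: always_node elim: always.cases)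

lemma always_coinduct_Leaf_left:
  assumes "X s"
    and "\<And>t. X t \<Longrightarrow> \<exists>p c f t'. t = Node p c (Leaf f) t' \<and> \<Phi> t \<and> X t'"
    and "\<And>f. \<Phi> (Leaf f)"
  shows "always \<Phi> s"
  using assms(1)
proof (coinduction arbitrary: s rule: always.coinduct)
  case (always s)
  then show ?case using assms(2,3) by fastforce
qed

text \<open>Only the right spine matters: in the profiles considered here all left children are leaves.\<close>

coinductive constant_outcome :: "(P \<Rightarrow> real) \<Rightarrow> strat \<Rightarrow> bool" for v where
  "conv (Node p c (Leaf f) s') \<Longrightarrow> payoff (Node p c (Leaf f) s') = Some v \<Longrightarrow>
    constant_outcome v s' \<Longrightarrow> constant_outcome v (Node p c (Leaf f) s')"

lemma constant_outcome_conv_payoff: "constant_outcome v s \<Longrightarrow> conv s \<and> payoff s = Some v"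
  by (erule constant_outcome.cases) simp

lemma constant_outcome_sconv: "constant_outcome v s \<Longrightarrow> sconv s"
proof (coinduction arbitrary: s rule: sconv.coinduct)
  case (sconv s)
  then show ?case by (cases rule: constant_outcome.cases) (auto intro: sconv_leaf)
qed

lemma constant_outcome_imp_always:
  assumes "constant_outcome v s" and "zero_one_game s"
    and "\<And>f. \<Phi> (Leaf f)"
    and "\<And>t. zero_one_game t \<Longrightarrow> constant_outcome v t \<Longrightarrow> \<Phi> t"
  shows "always \<Phi> s"
proof (rule always_coinduct_Leaf_left[where X = "\<lambda>t. constant_outcome v t \<and> zero_one_game t"])
  show "constant_outcome v s \<and> zero_one_game s"
    using assms(1,2) ..
next
  fix t
  assume t: "constant_outcome v t \<and> zero_one_game t"
  then obtain p c f t' where t_Node: "t = Node p c (Leaf f) t'" and "constant_outcome v t'"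
    by (auto elim: constant_outcome.cases)
  moreover have "zero_one_game t'" "\<Phi> t"
    using t t_Node assms(4) by (auto dest: zero_one_game_NodeD)
  ultimately show
    "\<exists>p c f t'. t = Node p c (Leaf f) t' \<and> \<Phi> t \<and> constant_outcome v t' \<and> zero_one_game t'"
    by blast
qed (fact assms(3))

lemma always_iff_constant_outcome:
  assumes "zero_one_game s"
    and "\<And>f. \<Phi> (Leaf f)"
    and "\<And>t. zero_one_game t \<Longrightarrow> \<Phi> t \<longleftrightarrow> conv t \<and> payoff t = Some v"
  shows "always \<Phi> s \<longleftrightarrow> constant_outcome v s"
proof
  assume "always \<Phi> s"
  then show "constant_outcome v s"
    using assms(1)
  proof (coinduction arbitrary: s rule: constant_outcome.coinduct)
    case (constant_outcome s)
    then obtain p c f s' where s: "s = Node p c (Leaf f) s'" and "zero_one_game s'"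
      by (auto elim: zero_one_game_cases)
    moreover have "\<Phi> s" "always \<Phi> s'"
      using constant_outcome(1) s by auto
    ultimately show ?case
      using assms(3) constant_outcome(2) by blast
  qed
next
  assume "constant_outcome v s"
  then show "always \<Phi> s"
    using assms by (auto intro: constant_outcome_imp_always dest: constant_outcome_conv_payoff)
qed

lemma alwaysD: "always \<Phi> s \<Longrightarrow> \<Phi> s"
  by (erule always.cases) simp_all

lemma SPE_imp_conv: "SPE s \<Longrightarrow> conv s"
  unfolding SPE_def PE_def by (auto dest: alwaysD sconv_imp_conv)

lemma SPE_iff_constant_outcome:
  assumes "zero_one_game s"
  shows "SPE s \<longleftrightarrow> (\<exists>v. constant_outcome v s)"
proof
  assume "SPE s"
  obtain v where "payoff s = Some v"
    using conv_zero_one_game_payoff[OF SPE_imp_conv[OF \<open>SPE s\<close>] assms] by blast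
  with \<open>SPE s\<close> assms have "constant_outcome v s"
  proof (coinduction arbitrary: s rule: constant_outcome.coinduct)
    case (constant_outcome s)
    then obtain p c f s' where s: "s = Node p c (Leaf f) s'" and "zero_one_game s'"
      by (auto elim: zero_one_game_cases)
    with constant_outcome have "PE s" "SPE s'"
      by (simp_all add: SPE_def)
    with constant_outcome s have "conv s" "payoff s' = Some v"
      using PE_zero_one_game_Node_iff SPE_imp_conv sconv_imp_conv by auto
    with s \<open>SPE s'\<close> \<open>zero_one_game s'\<close> \<open>payoff s = Some v\<close> show ?case
      by auto
  qed
  then show "\<exists>v. constant_outcome v s" by blast
next
  assume "\<exists>v. constant_outcome v s"
  then obtain v where "constant_outcome v s" ..
  then show "SPE s"
    unfolding SPE_def using assms
  proof (rule constant_outcome_imp_always)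
    show "PE (Leaf f)" for f
      by (simp add: PE_def sconv_leaf)
    fix t
    assume game_t: "zero_one_game t" and co_t: "constant_outcome v t"
    then obtain p c f t' where t: "t = Node p c (Leaf f) t'" and co_t': "constant_outcome v t'"
      by (auto elim: constant_outcome.cases)
    have "conv t'" "payoff t' = payoff t"
      using constant_outcome_conv_payoff[OF co_t] constant_outcome_conv_payoff[OF co_t'] by auto
    then show "PE t"
      using PE_zero_one_game_Node_iff[of p c f t'] game_t constant_outcome_sconv[OF co_t]
      unfolding t by blast
  qed
qed

lemma constant_outcome_zero_one_game:
  "constant_outcome v s \<Longrightarrow> zero_one_game s \<Longrightarrow> v = f01 \<or> v = f10"
  using constant_outcome_conv_payoff conv_zero_one_game_payoff by fastforce

theorem mainTheorem12:
  fixes s :: strat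
  assumes "S0 s \<or> S1 s"
  shows "SAcBes s \<or> SBcAes s \<longleftrightarrow> SPE s"
proof -
  have game: "zero_one_game s"
    using assms unfolding zero_one_game_def .
  have "SAcBes s \<longleftrightarrow> constant_outcome f10 s"
    unfolding SAcBes_def using game
    by (rule always_iff_constant_outcome) (auto intro: AcBes_other simp: AcBes_iff_zero_one_game)
  moreover have "SBcAes s \<longleftrightarrow> constant_outcome f01 s"
    unfolding SBcAes_def using game
    by (rule always_iff_constant_outcome) (auto intro: BcAes_other simp: BcAes_iff_zero_one_game)
  ultimately show ?thesis
    using SPE_iff_constant_outcome[OF game] constant_outcome_zero_one_game[OF _ game] by blast
qed

end
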